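(* Let $n\ge 1$ and let $K$ be the Kasteleyn matrix of the uniformly weighted Aztec diamond of size $n$, i.e. for $x\in\mathtt{B}$, $y\in\mathtt{W}$, $$K(x,y)=\begin{cases}1 & x-y=\pm e_1,\\ \mathrm{i} & x-y=\pm e_2,\\ 0&\text{otherwise.}\end{cases}$$ Let $G_n(\mathtt{w},\mathtt{b})=\sum_{x\in\mathtt{W},\,y\in\mathtt{B}} K^{-1}(x,y)\,w_1^{x_1}w_2^{x_2}b_1^{y_1}b_2^{y_2}$. Then $$\begin{aligned}G_n(\mathtt{w},\mathtt{b})=&\ \frac{w_1w_2^2b_2\,f_{n+1}(w_1^2b_1^2)\,f_n(w_2^2b_2^2)}{C(w_1,w_2)}\\ &+(1+\mathrm{i}w_1^2)\frac{(1+\mathrm{i}b_2^2)F^{0,0}_n+b_1^2\big(b_2w_1f_n(b_1^2w_1^2)+(\mathrm{i}+b_2^2)F^{0,1}_n\big)}{C(w_1,w_2)C(b_1,b_2)}\\ &+(\mathrm{i}+w_1^2)w_2^2\frac{b_1^2b_2^{2n+1}w_1w_2^{2n}f_n(b_1^2w_1^2)+(1+\mathrm{i}b_2^2)F^{1,0}_n+b_1^2(\mathrm{i}+b_2^2)F^{1,1}_n}{C(w_1,w_2)C(b_1,b_2)},\end{aligned}$$ where $C(r_1,r_2)=1+r_1^2r_2^2+\mathrm{i}(r_1^2+r_2^2)$ and $F^{k,l}_n=F^{k,l}_n(\mathtt{w},\mathtt{b})$ are as defined in the context.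
   Context: $\mathrm{i}=\sqrt{-1}$. Aztec diamond of size $n$ (Kasteleyn coordinates): white vertices $\mathtt{W}=\{(x_1,x_2): x_1\text{ odd},\ x_2\text{ even},\ 1\le x_1\le 2n-1,\ 0\le x_2\le 2n\}$, black vertices $\mathtt{B}=\{(x_1,x_2): x_1\text{ even},\ x_2\text{ odd},\ 0\le x_1\le 2n,\ 1\le x_2\le 2n-1\}$, $e_1=(1,1)$, $e_2=(-1,1)$; a black vertex $x$ and a white vertex $y$ are adjacent iff $x-y\in\{\pm e_1,\pm e_2\}$. $K$ has rows indexed by $\mathtt{B}$ and columns by $\mathtt{W}$, so $K^{-1}$ is indexed by $\mathtt{W}\times\mathtt{B}$. $\mathtt{w}=(w_1,w_2)$, $\mathtt{b}=(b_1,b_2)$ are formal variables. $f_n(t)=(1-t^n)/(1-t)=1+t+\dots+t^{n-1}$. Define $F_n(w,b)=-\frac{\mathrm{i}}{2}f_n\!\left(\frac{(1+b\mathrm{i})(1+w\mathrm{i})}{2}\right)$ and $F^{0,0}_n(\mathtt{w},\mathtt{b})=F_n(w_1^2,b_2^2)w_1b_2$, $F^{0,1}_n(\mathtt{w},\mathtt{b})=F_n(-1/w_1^2,-b_2^2)w_1^{2n-1}b_1^{2n}b_2\mathrm{i}$, $F^{1,0}_n(\mathtt{w},\mathtt{b})=F_n(-w_1^2,-1/b_2^2)w_1w_2^{2n}b_2^{2n-1}\mathrm{i}$, $F^{1,1}_n(\mathtt{w},\mathtt{b})=F_n(1/w_1^2,1/b_2^2)w_1^{2n-1}w_2^{2n}b_1^{2n}b_2^{2n-1}$.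 *)

theory Defs
  imports Complex_Main
begin

text \<open>Vertices of the Aztec diamond of size n (Kasteleyn coordinates); all coordinates are
  nonnegative, so we use pairs of naturals.\<close>

definition Wset :: "nat \<Rightarrow> (nat \<times> nat) set" where
  "Wset n = {(x1, x2). odd x1 \<and> even x2 \<and> 1 \<le> x1 \<and> x1 \<le> 2*n - 1 \<and> x2 \<le> 2*n}"

definition Bset :: "nat \<Rightarrow> (nat \<times> nat) set" where
  "Bset n = {(x1, x2). even x1 \<and> odd x2 \<and> x1 \<le> 2*n \<and> 1 \<le> x2 \<and> x2 \<le> 2*n - 1}"

text \<open>Kasteleyn matrix, rows indexed by black, columns by white vertices.
  e1 = (1,1), e2 = (-1,1).\<close>

definition Kast :: "nat \<Rightarrow> nat \<times> nat \<Rightarrow> nat \<times> nat \<Rightarrow> complex" where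
  "Kast n x y =
    (if x \<in> Bset n \<and> y \<in> Wset n then
       (let d = (int (fst x) - int (fst y), int (snd x) - int (snd y)) in
        if d = (1, 1) \<or> d = (-1, -1) then 1
        else if d = (-1, 1) \<or> d = (1, -1) then \<i>
        else 0)
     else 0)"

definition is_Kinv :: "nat \<Rightarrow> (nat \<times> nat \<Rightarrow> nat \<times> nat \<Rightarrow> complex) \<Rightarrow> bool" where
  "is_Kinv n G \<longleftrightarrow>
     (\<forall>y x. \<not> (y \<in> Wset n \<and> x \<in> Bset n) \<longrightarrow> G y x = 0) \<and>
     (\<forall>x\<in>Bset n. \<forall>z\<in>Bset n. (\<Sum>y\<in>Wset n. Kast n x y * G y z) = (if x = z then 1 else 0)) \<and>
     (\<forall>y\<in>Wset n. \<forall>y'\<in>Wset n. (\<Sum>x\<in>Bset n. G y x * Kast n x y') = (if y = y' then 1 else 0))"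

definition Kinv :: "nat \<Rightarrow> nat \<times> nat \<Rightarrow> nat \<times> nat \<Rightarrow> complex" where
  "Kinv n = (THE G. is_Kinv n G)"

definition Gen :: "nat \<Rightarrow> complex \<Rightarrow> complex \<Rightarrow> complex \<Rightarrow> complex \<Rightarrow> complex" where
  "Gen n w1 w2 b1 b2 =
     (\<Sum>x\<in>Wset n. \<Sum>y\<in>Bset n.
        Kinv n x y * w1 ^ fst x * w2 ^ snd x * b1 ^ fst y * b2 ^ snd y)"

definition fpoly :: "nat \<Rightarrow> complex \<Rightarrow> complex" where
  "fpoly n t = (\<Sum>k<n. t ^ k)"

definition Fn :: "nat \<Rightarrow> complex \<Rightarrow> complex \<Rightarrow> complex" where
  "Fn n w b = - (\<i> / 2) * fpoly n ((1 + b * \<i>) * (1 + w * \<i>) / 2)"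

definition F00 :: "nat \<Rightarrow> complex \<Rightarrow> complex \<Rightarrow> complex \<Rightarrow> complex \<Rightarrow> complex" where
  "F00 n w1 w2 b1 b2 = Fn n (w1^2) (b2^2) * w1 * b2"

definition F01 :: "nat \<Rightarrow> complex \<Rightarrow> complex \<Rightarrow> complex \<Rightarrow> complex \<Rightarrow> complex" where
  "F01 n w1 w2 b1 b2 = Fn n (-1 / w1^2) (- (b2^2)) * w1^(2*n-1) * b1^(2*n) * b2 * \<i>"

definition F10 :: "nat \<Rightarrow> complex \<Rightarrow> complex \<Rightarrow> complex \<Rightarrow> complex \<Rightarrow> complex" where
  "F10 n w1 w2 b1 b2 = Fn n (- (w1^2)) (-1 / b2^2) * w1 * w2^(2*n) * b2^(2*n-1) * \<i>"

definition F11 :: "nat \<Rightarrow> complex \<Rightarrow> complex \<Rightarrow> complex \<Rightarrow> complex \<Rightarrow> complex" where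
  "F11 n w1 w2 b1 b2 = Fn n (1 / w1^2) (1 / b2^2) * w1^(2*n-1) * w2^(2*n) * b1^(2*n) * b2^(2*n-1)"

definition Cpoly :: "complex \<Rightarrow> complex \<Rightarrow> complex" where
  "Cpoly r1 r2 = 1 + r1^2 * r2^2 + \<i> * (r1^2 + r2^2)"

end

theory Submission
  imports Defs "HOL-Computational_Algebra.Polynomial" "Jordan_Normal_Form.Determinant"
begin

(* Write the white vertex (2j+1, 2k) and the black vertex (2a, 2c+1) in halved coordinates and
   pass to generating functions in the squared variables \<alpha> = w1\<^sup>2, \<gamma> = w2\<^sup>2, p = b1\<^sup>2, q = b2\<^sup>2.
   Multiplying by K multiplies a generating function by C(x, y) = 1 + x y + i (x + y), up to two
   boundary rows.  Applied to K K\<^sup>-\<^sup>1 = 1 this expresses the generating function of K\<^sup>-\<^sup>1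
   through its rows k = 0 and k = n, and applied to K\<^sup>-\<^sup>1 K = 1 it expresses these rows through
   the four corner polynomials in q.  On the curve C(p, q) = 0 the bulk term drops out and leaves
   one linear relation between two corner polynomials of degree < n; as (q + i)\<^sup>n and (1 + i q)\<^sup>n
   are coprime, it has at most one solution, and the explicit F\<^sup>k\<^sup>,\<^sup>l solve it.  The same
   uniqueness shows that K has trivial kernel, so K\<^sup>-\<^sup>1 exists. *)

section \<open>Halved coordinates\<close>

(* K between the black vertex (2a, 2c+1) and the white vertex (2j+1, 2k); a, k \<le> n and c, j < n. *)
definition kast :: "nat \<Rightarrow> nat \<Rightarrow> nat \<Rightarrow> nat \<Rightarrow> complex" where
  "kast a c j k =
     (if a = Suc j \<and> c = k then 1 else 0) + (if a = j \<and> k = Suc c then 1 else 0)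
   + (if a = j \<and> c = k then \<i> else 0) + (if a = Suc j \<and> k = Suc c then \<i> else 0)"

lemma kast_swap: "kast a c j k = kast k j c a"
  by (auto simp: kast_def)

lemma Kast_eq_kast:
  assumes "a \<le> n" "c < n" "j < n" "k \<le> n"
  shows "Kast n (2*a, 2*c+1) (2*j+1, 2*k) = kast a c j k"
  using assms by (auto simp: Kast_def Wset_def Bset_def kast_def)

lemma Wset_eq_image: "Wset n = (\<lambda>(j, k). (2*j+1, 2*k)) ` ({..<n} \<times> {..<Suc n})"
proof (rule Set.set_eqI, rule iffI)
  fix y assume "y \<in> Wset n"
  then obtain x1 x2 where y: "y = (x1, x2)" "odd x1" "even x2" "1 \<le> x1" "x1 \<le> 2*n - 1" "x2 \<le> 2*n"
    by (auto simp: Wset_def)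
  then have "x1 = 2*(x1 div 2)+1" "x2 = 2*(x2 div 2)" "x1 div 2 < n" "x2 div 2 < Suc n"
    by auto
  then show "y \<in> (\<lambda>(j, k). (2*j+1, 2*k)) ` ({..<n} \<times> {..<Suc n})"
    using y(1) by (intro image_eqI[of _ _ "(x1 div 2, x2 div 2)"]) auto
qed (auto simp: Wset_def)

lemma Bset_eq_image: "Bset n = (\<lambda>(a, c). (2*a, 2*c+1)) ` ({..<Suc n} \<times> {..<n})"
proof (rule Set.set_eqI, rule iffI)
  fix x assume "x \<in> Bset n"
  then obtain x1 x2 where x: "x = (x1, x2)" "even x1" "odd x2" "x1 \<le> 2*n" "1 \<le> x2" "x2 \<le> 2*n - 1"
    by (auto simp: Bset_def)
  then have "x1 = 2*(x1 div 2)" "x2 = 2*(x2 div 2)+1" "x1 div 2 < Suc n" "x2 div 2 < n"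
    by auto
  then show "x \<in> (\<lambda>(a, c). (2*a, 2*c+1)) ` ({..<Suc n} \<times> {..<n})"
    using x(1) by (intro image_eqI[of _ _ "(x1 div 2, x2 div 2)"]) auto
qed (auto simp: Bset_def)

lemma sum_Wset: "(\<Sum>y\<in>Wset n. f y) = (\<Sum>j<n. \<Sum>k<Suc n. f (2*j+1, 2*k))"
proof -
  have inj: "inj_on (\<lambda>(j, k). (2*j+1, 2*k::nat)) ({..<n} \<times> {..<Suc n})"
    by (auto simp: inj_on_def)
  show ?thesis
    unfolding Wset_eq_image sum.reindex[OF inj] sum.cartesian_product
    by (simp add: comp_def case_prod_beta)
qed

lemma sum_Bset: "(\<Sum>x\<in>Bset n. f x) = (\<Sum>a<Suc n. \<Sum>c<n. f (2*a, 2*c+1))"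
proof -
  have inj: "inj_on (\<lambda>(a, c). (2*a, 2*c+1::nat)) ({..<Suc n} \<times> {..<n})"
    by (auto simp: inj_on_def)
  show ?thesis
    unfolding Bset_eq_image sum.reindex[OF inj]
    by (simp add: sum.cartesian_product case_prod_beta del: lessThan_Suc)
qed

section \<open>Generating functions and multiplication by K\<close>

(* Cpoly r1 r2 = Csq (r1\<^sup>2) (r2\<^sup>2) *)
definition Csq :: "complex \<Rightarrow> complex \<Rightarrow> complex" where
  "Csq x y = 1 + x*y + \<i>*(x+y)"

lemma Csq_commute: "Csq x y = Csq y x"
  by (simp add: Csq_def algebra_simps)

lemma sum_sum_delta:
  fixes n m :: nat and x :: "'a::semiring_0"
  shows "(\<Sum>j<n. \<Sum>k<m. (if j = J \<and> k = K then x else 0) * g j k) =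
     (if J < n \<and> K < m then x * g J K else 0)"
proof -
  have "(\<Sum>j<n. \<Sum>k<m. (if j = J \<and> k = K then x else 0) * g j k)
      = (\<Sum>j<n. if j = J then (if K < m then x * g j K else 0) else 0)"
    by (intro sum.cong refl) (simp add: if_distrib[of "\<lambda>y. y * _"] cong: if_cong)
  then show ?thesis
    by simp
qed

lemma kast_alt:
  "kast a c j k =
     (if j = a - 1 \<and> k = c then (if 0 < a then 1 else 0) else 0) + (if j = a \<and> k = Suc c then 1 else 0)
   + (if j = a \<and> k = c then \<i> else 0) + (if j = a - 1 \<and> k = Suc c then (if 0 < a then \<i> else 0) else 0)"
  by (auto simp: kast_def)

lemma kast_row_genfun:
  assumes "a \<le> n" "c < n"
  shows "p * (\<Sum>j<n. \<Sum>k<Suc n. kast a c j k * p^j * q^k)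
    = p^a * q^c * Csq p q - (if a = 0 then (1 + \<i>*q) * q^c else 0)
      - (if a = n then p^Suc n * (q + \<i>) * q^c else 0)"
proof -
  have "(\<Sum>j<n. \<Sum>k<Suc n. kast a c j k * p^j * q^k) = (\<Sum>j<n. \<Sum>k<Suc n. kast a c j k * (p^j * q^k))"
    by (simp add: mult.assoc)
  also have "\<dots> = (if 0 < a then p^(a-1) * q^c * (1 + \<i>*q) else 0) + (if a < n then p^a * q^c * (q + \<i>) else 0)"
    using assms unfolding kast_alt distrib_right sum.distrib sum_sum_delta
    by (auto simp: algebra_simps)
  finally have "p * (\<Sum>j<n. \<Sum>k<Suc n. kast a c j k * p^j * q^k)
     = (if 0 < a then p^a * q^c * (1 + \<i>*q) else 0) + (if a < n then p^Suc a * q^c * (q + \<i>) else 0)"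
    by (cases a) (simp_all add: algebra_simps)
  then show ?thesis
    using assms by (cases "a = 0"; cases "a = n") (simp_all add: Csq_def algebra_simps)
qed

lemma sum_swap_pairs:
  "(\<Sum>j\<in>A. \<Sum>k\<in>B. \<Sum>a\<in>C. \<Sum>c\<in>D. f j k a c) = (\<Sum>a\<in>C. \<Sum>c\<in>D. \<Sum>j\<in>A. \<Sum>k\<in>B. f j k a c)"
proof -
  have "(\<Sum>j\<in>A. \<Sum>k\<in>B. \<Sum>a\<in>C. \<Sum>c\<in>D. f j k a c) = (\<Sum>j\<in>A. \<Sum>a\<in>C. \<Sum>k\<in>B. \<Sum>c\<in>D. f j k a c)"
    by (intro sum.cong refl sum.swap)
  also have "\<dots> = (\<Sum>a\<in>C. \<Sum>j\<in>A. \<Sum>c\<in>D. \<Sum>k\<in>B. f j k a c)"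
    by (subst sum.swap) (intro sum.cong refl sum.swap)
  also have "\<dots> = (\<Sum>a\<in>C. \<Sum>c\<in>D. \<Sum>j\<in>A. \<Sum>k\<in>B. f j k a c)"
    by (intro sum.cong refl sum.swap)
  finally show ?thesis .
qed

lemma sum_if_const: "(\<Sum>x\<in>A. if P then f x else 0) = (if P then sum f A else 0)"
  by simp

lemma vec_kast_genfun:
  "p * (\<Sum>j<n. \<Sum>k<Suc n. (\<Sum>a<Suc n. \<Sum>c<n. v a c * kast a c j k) * p^j * q^k)
    = (\<Sum>a<Suc n. \<Sum>c<n. v a c * p^a * q^c) * Csq p q - (1 + \<i>*q) * (\<Sum>c<n. v 0 c * q^c)
      - p^Suc n * (q + \<i>) * (\<Sum>c<n. v n c * q^c)"
proof -
  have "p * (\<Sum>j<n. \<Sum>k<Suc n. (\<Sum>a<Suc n. \<Sum>c<n. v a c * kast a c j k) * p^j * q^k)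
      = (\<Sum>a<Suc n. \<Sum>c<n. v a c * (p * (\<Sum>j<n. \<Sum>k<Suc n. kast a c j k * p^j * q^k)))"
    by (simp add: sum_distrib_left sum_distrib_right mult_ac sum_swap_pairs[of _ "{..<n}"] del: sum.lessThan_Suc)
  also have "\<dots> = (\<Sum>a<Suc n. \<Sum>c<n. v a c * (p^a * q^c * Csq p q
      - (if a = 0 then (1 + \<i>*q) * q^c else 0) - (if a = n then p^Suc n * (q + \<i>) * q^c else 0)))"
    by (intro sum.cong refl) (simp add: kast_row_genfun del: sum.lessThan_Suc)
  also have "\<dots> = (\<Sum>a<Suc n. \<Sum>c<n. v a c * p^a * q^c) * Csq p q - (1 + \<i>*q) * (\<Sum>c<n. v 0 c * q^c)
      - p^Suc n * (q + \<i>) * (\<Sum>c<n. v n c * q^c)"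
    by (simp add: sum_if_const right_diff_distrib sum_subtractf sum_distrib_left sum_distrib_right
        if_distrib[of "\<lambda>y. _ * y"]
        mult_ac cong: if_cong del: sum.lessThan_Suc)
  finally show ?thesis .
qed

lemma kast_vec_genfun:
  "x * (\<Sum>a<Suc n. \<Sum>c<n. (\<Sum>j<n. \<Sum>k<Suc n. kast a c j k * u j k) * y^a * x^c)
    = (\<Sum>j<n. \<Sum>k<Suc n. u j k * y^j * x^k) * Csq y x - (1 + \<i>*y) * (\<Sum>j<n. u j 0 * y^j)
      - x^Suc n * (y + \<i>) * (\<Sum>j<n. u j n * y^j)"
proof -
  have "(\<Sum>a<Suc n. \<Sum>c<n. (\<Sum>j<n. \<Sum>k<Suc n. kast a c j k * u j k) * y^a * x^c)
      = (\<Sum>c<n. \<Sum>a<Suc n. (\<Sum>k<Suc n. \<Sum>j<n. u j k * kast k j c a) * x^c * y^a)"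
    by (subst sum.swap)
      (simp add: kast_swap[of _ _ "_::nat"] sum.swap[where A="{..<n}"] mult_ac del: sum.lessThan_Suc)
  moreover have "(\<Sum>k<Suc n. \<Sum>j<n. u j k * x^k * y^j) = (\<Sum>j<n. \<Sum>k<Suc n. u j k * y^j * x^k)"
    by (subst sum.swap) (simp add: mult_ac)
  ultimately show ?thesis
    using vec_kast_genfun[where p=x and n=n and v="\<lambda>k j. u j k" and q=y]
    by (simp add: Csq_commute del: sum.lessThan_Suc)
qed

section \<open>Elimination of the bulk term\<close>

definition Csq_root :: "complex \<Rightarrow> complex" where
  "Csq_root q = - (1 + \<i>*q) / (q + \<i>)"

lemma Csq_Csq_root: "q + \<i> \<noteq> 0 \<Longrightarrow> Csq (Csq_root q) q = 0"
  by (simp add: Csq_def Csq_root_def field_simps)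

lemma Csq_root_mult: "q + \<i> \<noteq> 0 \<Longrightarrow> (q + \<i>) * Csq_root q = - (1 + \<i>*q)"
  by (simp add: Csq_root_def)

(* On the curve Csq s q = 0 only the two boundary rows of a row identity survive. *)
lemma boundary_relation_at_Csq_root:
  assumes "q + \<i> \<noteq> 0" "1 + \<i>*q \<noteq> 0"
    and "s * X = V * Csq s q - (1 + \<i>*q) * L - s^Suc n * (q + \<i>) * R"
    and "s = Csq_root q"
  shows "L - s^n * R = X / (q + \<i>)"
proof -
  have "s^Suc n * (q + \<i>) = s^n * ((q + \<i>) * s)"
    by (simp add: mult_ac)
  also have "\<dots> = - (1 + \<i>*q) * s^n"
    using assms(1,4) Csq_root_mult by simp
  finally have H: "s^Suc n * (q + \<i>) = - (1 + \<i>*q) * s^n" .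
  have "Csq s q = 0"
    using assms(1,4) Csq_Csq_root by simp
  with assms(3) have sX: "s * X = - ((1 + \<i>*q) * (L - s^n * R))"
    unfolding H by (simp add: algebra_simps)
  have "(1 + \<i>*q) * X = - ((q + \<i>) * s) * X"
    using assms(1,4) Csq_root_mult by simp
  also have "\<dots> = - (q + \<i>) * (s * X)"
    by (simp add: algebra_simps)
  also have "\<dots> = (1 + \<i>*q) * ((L - s^n * R) * (q + \<i>))"
    unfolding sX by (simp add: algebra_simps)
  finally have "X = (L - s^n * R) * (q + \<i>)"
    using assms(2) by simp
  then show ?thesis
    using assms(1) by simp
qed

lemma infinite_Compl_complex: "finite (E :: complex set) \<Longrightarrow> infinite (- E)"
  using infinite_UNIV_char_0 by (metis Compl_eq_Diff_UNIV Diff_infinite_finite)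

(* (q + i)\<^sup>n P = (-(1 + i q))\<^sup>n Q forces P = Q = 0: the left side vanishes to order n at -i,
   the factor on the right not at all, and degree Q < n. *)
lemma poly_eq_Csq_root_power_imp_zero:
  fixes P Q :: "complex poly"
  assumes "degree P < n" "degree Q < n" "finite E"
    and eq: "\<forall>q. q \<notin> E \<longrightarrow> q + \<i> \<noteq> 0 \<and> poly P q = Csq_root q ^ n * poly Q q"
  shows "P = 0 \<and> Q = 0"
proof -
  define A where "A = [:\<i>, 1:] ^ n"
  define B where "B = [:-1, -\<i>:] ^ n"
  have "A * P - B * Q = 0"
  proof (rule ccontr)
    assume "A * P - B * Q \<noteq> 0"
    then have "finite {x. poly (A * P - B * Q) x = 0}"
      by (rule poly_roots_finite)
    moreover have "- E \<subseteq> {x. poly (A * P - B * Q) x = 0}"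
    proof
      fix q assume "q \<in> - E"
      then have "q \<notin> E"
        by simp
      have "poly A q * Csq_root q ^ n = ((q + \<i>) * Csq_root q) ^ n"
        by (simp add: A_def power_mult_distrib add.commute)
      also have "\<dots> = (- (1 + \<i>*q)) ^ n"
        using eq \<open>q \<notin> E\<close> Csq_root_mult by simp
      also have "\<dots> = poly B q"
        by (simp add: B_def algebra_simps)
      finally have "poly A q * Csq_root q ^ n = poly B q" .
      then show "q \<in> {x. poly (A * P - B * Q) x = 0}"
        using eq \<open>q \<notin> E\<close> by (simp add: mult.assoc[symmetric])
    qed
    ultimately show False
      using assms(3) infinite_Compl_complex finite_subset by blast
  qed
  then have AB: "A * P = B * Q"
    by simp
  have A0: "A \<noteq> 0"
    by (simp add: A_def)
  have B_order: "order (-\<i>) B = 0"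
    by (rule order_0I) (simp add: B_def)
  have "Q = 0"
  proof (rule ccontr)
    assume Q: "Q \<noteq> 0"
    then have BQ: "B * Q \<noteq> 0"
      by (simp add: B_def)
    with AB have AP: "A * P \<noteq> 0"
      by simp
    have "order (-\<i>) (A * P) = n + order (-\<i>) P"
      using order_mult[OF AP] order_power_n_n[of "-\<i>" n] by (simp add: A_def)
    moreover have "order (-\<i>) (B * Q) = order (-\<i>) Q"
      using order_mult[OF BQ] B_order by simp
    ultimately have "n \<le> order (-\<i>) Q"
      using AB by simp
    then show False
      using order_degree[OF Q, of "-\<i>"] assms(2) by simp
  qed
  with AB A0 show ?thesis
    by simp
qed

lemma poly_sum_monom:
  fixes f :: "nat \<Rightarrow> 'a::comm_semiring_1"
  shows "poly (\<Sum>c<n. monom (f c) c) q = (\<Sum>c<n. f c * q^c)"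
  by (simp add: poly_sum poly_monom)

lemma degree_sum_monom_less: "0 < n \<Longrightarrow> degree (\<Sum>c<n. monom (f c) c) < n"
  by (rule degree_sum_less) (auto intro: le_less_trans[OF degree_monom_le])

lemma coeffs_zero_if_cofinitely_vanishing:
  fixes f :: "nat \<Rightarrow> complex"
  assumes "finite E" "\<forall>x. x \<notin> E \<longrightarrow> (\<Sum>j<m. f j * x^j) = 0" "j < m"
  shows "f j = 0"
proof -
  define P where "P = (\<Sum>j<m. monom (f j) j)"
  have "P = 0"
  proof (rule ccontr)
    assume "P \<noteq> 0"
    then have "finite {x. poly P x = 0}"
      by (rule poly_roots_finite)
    moreover have "- E \<subseteq> {x. poly P x = 0}"
      using assms(2) by (auto simp: P_def poly_sum_monom)
    ultimately show False
      using assms(1) infinite_Compl_complex finite_subset by blast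
  qed
  then have "coeff P j = 0"
    by simp
  then show ?thesis
    using assms(3) by (simp add: P_def coeff_sum)
qed

lemma kast_kernel_trivial:
  assumes "0 < n" and ker: "\<forall>a<Suc n. \<forall>c<n. (\<Sum>j<n. \<Sum>k<Suc n. kast a c j k * u j k) = 0"
    and "j < n" "k < Suc n"
  shows "u j k = 0"
proof -
  define U where "U y x = (\<Sum>j<n. \<Sum>k<Suc n. u j k * y^j * x^k)" for y x
  define Bot where "Bot = (\<Sum>j<n. monom (u j 0) j)"
  define Top where "Top = (\<Sum>j<n. monom (u j n) j)"
  have genfun: "U y x * Csq y x - (1 + \<i>*y) * poly Bot y - x^Suc n * (y + \<i>) * poly Top y = 0" for y x
    using kast_vec_genfun[where x = x and n = n and u = u and y = y] ker
    by (simp add: U_def Bot_def Top_def poly_sum_monom del: sum.lessThan_Suc)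
  have "poly Bot y - Csq_root y ^ n * poly Top y = 0" if "y \<notin> {\<i>, -\<i>}" for y
  proof -
    have "1 + \<i>*y = \<i> * (y - \<i>)"
      by (simp add: algebra_simps)
    then have "y + \<i> \<noteq> 0" "1 + \<i>*y \<noteq> 0"
      using that by (auto simp: add_eq_0_iff2)
    then have "poly Bot y - Csq_root y ^ n * poly Top y = 0 / (y + \<i>)"
      using genfun[of y "Csq_root y"]
      by (intro boundary_relation_at_Csq_root[where V = "U y (Csq_root y)"]) (simp_all add: Csq_commute)
    then show ?thesis
      by simp
  qed
  then have "Bot = 0 \<and> Top = 0"
    using assms(1)
    by (intro poly_eq_Csq_root_power_imp_zero[where E = "{\<i>, -\<i>}" and n = n])
       (auto simp: Bot_def Top_def degree_sum_monom_less add_eq_0_iff2)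
  then have U0: "U y x = 0" if "Csq y x \<noteq> 0" for y x
    using genfun[of y x] that by simp
  have "(\<Sum>k<Suc n. u j k * x^k) = 0" for x
  proof (rule coeffs_zero_if_cofinitely_vanishing[where f = "\<lambda>j. \<Sum>k<Suc n. u j k * x^k"])
    have "[:1 + \<i>*x, x + \<i>:] \<noteq> 0"
      by (cases "x + \<i> = 0") (auto simp: add_eq_0_iff2)
    then show "finite {y. poly [:1 + \<i>*x, x + \<i>:] y = 0}"
      by (rule poly_roots_finite)
    show "\<forall>y. y \<notin> {y. poly [:1 + \<i>*x, x + \<i>:] y = 0} \<longrightarrow> (\<Sum>j<n. (\<Sum>k<Suc n. u j k * x^k) * y^j) = 0"
      using U0 by (auto simp: U_def Csq_def algebra_simps sum_distrib_left sum_distrib_right del: sum.lessThan_Suc)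
  qed (use assms(3) in simp)
  then show ?thesis
    using assms(4)
    by (intro coeffs_zero_if_cofinitely_vanishing[where E = "{}" and f = "u j"]) (simp_all add: mult.commute)
qed

section \<open>Existence of the inverse\<close>

lemma sum_lessThan_mult: "(\<Sum>t<m*p. f t) = (\<Sum>j<m. \<Sum>k<p. f (j*p + k))"
  for m p :: nat
proof -
  have "sum f {j*p..<j*p + p} = (\<Sum>k<p. f (j*p + k))" for j
    using sum.shift_bounds_nat_ivl[of f 0 "j*p" p] by (simp add: atLeast0LessThan add.commute)
  then show ?thesis
    by (simp add: sum.nat_group[symmetric])
qed

lemma pair_index_less: "a < m \<Longrightarrow> c < n \<Longrightarrow> a*n + c < m*(n::nat)"
proof -
  assume "a < m" "c < n"
  then have "a*n + c < Suc a * n"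
    by simp
  also have "\<dots> \<le> m*n"
    using \<open>a < m\<close> by (intro mult_le_mono1) simp
  finally show ?thesis .
qed

lemma pair_index_div_mod: "c < n \<Longrightarrow> (a*n + c) div n = a \<and> (a*n + c) mod n = (c::nat)"
  by simp

lemma pair_index_eq_iff: "c < n \<Longrightarrow> c' < n \<Longrightarrow> a*n + c = a'*n + c' \<longleftrightarrow> a = a' \<and> c = (c'::nat)"
  by (metis pair_index_div_mod)

(* Black (a, c) is row a n + c, white (j, k) is column j (n + 1) + k. *)
definition kast_mat :: "nat \<Rightarrow> complex mat" where
  "kast_mat n = mat (n * Suc n) (n * Suc n) (\<lambda>(r, t). kast (r div n) (r mod n) (t div Suc n) (t mod Suc n))"

lemma kast_mat_carrier: "kast_mat n \<in> carrier_mat (n * Suc n) (n * Suc n)"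
  by (simp add: kast_mat_def)

lemma kast_mat_index:
  assumes "a < Suc n" "c < n" "j < n" "k < Suc n"
  shows "kast_mat n $$ (a*n + c, j * Suc n + k) = kast a c j k"
proof -
  have "(a*n + c) div n = a" "(a*n + c) mod n = c" "(j * Suc n + k) div Suc n = j" "(j * Suc n + k) mod Suc n = k"
    using pair_index_div_mod assms(2,4) by blast+
  then show ?thesis
    using pair_index_less[OF assms(1,2)] pair_index_less[OF assms(3,4)]
    unfolding kast_mat_def by (simp only: index_mat(1) mult.commute[of "Suc n"] case_prod_conv)
qed

lemma mult_mat_vec_index_sum:
  "A \<in> carrier_mat m N \<Longrightarrow> v \<in> carrier_vec N \<Longrightarrow> i < m \<Longrightarrow> (A *\<^sub>v v) $ i = (\<Sum>t<N. A $$ (i, t) * v $ t)"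
  by (simp add: scalar_prod_def atLeast0LessThan)

lemma mult_mat_index_sum:
  "A \<in> carrier_mat m N \<Longrightarrow> B \<in> carrier_mat N p \<Longrightarrow> i < m \<Longrightarrow> j < p \<Longrightarrow>
     (A * B) $$ (i, j) = (\<Sum>t<N. A $$ (i, t) * B $$ (t, j))"
  by (simp add: scalar_prod_def atLeast0LessThan)

lemma kast_mat_mult_vec:
  assumes "a < Suc n" "c < n" "v \<in> carrier_vec (n * Suc n)"
  shows "(kast_mat n *\<^sub>v v) $ (a*n + c) = (\<Sum>j<n. \<Sum>k<Suc n. kast a c j k * v $ (j * Suc n + k))"
proof -
  have "a*n + c < n * Suc n"
    using pair_index_less[OF assms(1,2)] by (simp add: mult.commute)
  then have "(kast_mat n *\<^sub>v v) $ (a*n + c) = (\<Sum>t<n * Suc n. kast_mat n $$ (a*n + c, t) * v $ t)"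
    by (rule mult_mat_vec_index_sum[OF kast_mat_carrier assms(3)])
  also have "\<dots> = (\<Sum>j<n. \<Sum>k<Suc n. kast_mat n $$ (a*n + c, j * Suc n + k) * v $ (j * Suc n + k))"
    by (rule sum_lessThan_mult)
  also have "\<dots> = (\<Sum>j<n. \<Sum>k<Suc n. kast a c j k * v $ (j * Suc n + k))"
    using assms(1,2) by (intro sum.cong refl) (simp only: kast_mat_index lessThan_iff)
  finally show ?thesis .
qed

lemma kast_mat_det_nonzero:
  assumes "0 < n"
  shows "det (kast_mat n) \<noteq> 0"
proof
  assume "det (kast_mat n) = 0"
  then obtain v where v: "v \<in> carrier_vec (n * Suc n)" "v \<noteq> 0\<^sub>v (n * Suc n)"
    "kast_mat n *\<^sub>v v = 0\<^sub>v (n * Suc n)"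
    using det_0_iff_vec_prod_zero[OF kast_mat_carrier] by blast
  have "(\<Sum>j<n. \<Sum>k<Suc n. kast a c j k * v $ (j * Suc n + k)) = 0" if "a < Suc n" "c < n" for a c
  proof -
    have "a*n + c < n * Suc n"
      using pair_index_less[OF that] by (simp add: mult.commute)
    then show ?thesis
      using v(3) kast_mat_mult_vec[OF that v(1)] by simp
  qed
  then have vanish: "v $ (j * Suc n + k) = 0" if "j < n" "k < Suc n" for j k
    using kast_kernel_trivial[OF assms, of "\<lambda>j k. v $ (j * Suc n + k)"] that by blast
  have "v $ t = 0" if "t < n * Suc n" for t
  proof -
    have "v $ t = v $ ((t div Suc n) * Suc n + t mod Suc n)"
      by (simp only: div_mult_mod_eq)
    also have "\<dots> = 0"
      using that by (intro vanish) (simp_all add: less_mult_imp_div_less)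
    finally show ?thesis .
  qed
  then have "v = 0\<^sub>v (n * Suc n)"
    using v(1) by (intro eq_vecI) auto
  with v(2) show False ..
qed

lemma kast_mat_invertible:
  assumes "0 < n"
  obtains B where "B \<in> carrier_mat (n * Suc n) (n * Suc n)"
    "B * kast_mat n = 1\<^sub>m (n * Suc n)" "kast_mat n * B = 1\<^sub>m (n * Suc n)"
proof -
  have "kast_mat n \<in> Units (ring_mat TYPE(complex) (n * Suc n) ())"
    by (rule det_non_zero_imp_unit[OF kast_mat_carrier kast_mat_det_nonzero[OF assms]])
  then have "\<exists>B \<in> carrier_mat (n * Suc n) (n * Suc n).
      B * kast_mat n = 1\<^sub>m (n * Suc n) \<and> kast_mat n * B = 1\<^sub>m (n * Suc n)"
    unfolding Units_def ring_mat_def by auto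
  with that show ?thesis
    by blast
qed

definition WB_of_mat :: "nat \<Rightarrow> complex mat \<Rightarrow> nat \<times> nat \<Rightarrow> nat \<times> nat \<Rightarrow> complex" where
  "WB_of_mat n B y x = (if y \<in> Wset n \<and> x \<in> Bset n
     then B $$ ((fst y div 2) * Suc n + snd y div 2, (fst x div 2) * n + snd x div 2) else 0)"

lemma WB_of_mat_pair:
  "j < n \<Longrightarrow> k < Suc n \<Longrightarrow> a < Suc n \<Longrightarrow> c < n \<Longrightarrow>
     WB_of_mat n B (2*j+1, 2*k) (2*a, 2*c+1) = B $$ (j * Suc n + k, a*n + c)"
  unfolding WB_of_mat_def Wset_eq_image Bset_eq_image by auto

lemma Kast_mult_WB_of_mat:
  assumes B: "B \<in> carrier_mat (n * Suc n) (n * Suc n)"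
    and KB: "kast_mat n * B = 1\<^sub>m (n * Suc n)" and "x \<in> Bset n" "z \<in> Bset n"
  shows "(\<Sum>y\<in>Wset n. Kast n x y * WB_of_mat n B y z) = (if x = z then 1 else 0)"
proof -
  obtain a c a' c' where ac: "a < Suc n" "c < n" "x = (2*a, 2*c+1)"
    and ac': "a' < Suc n" "c' < n" "z = (2*a', 2*c'+1)"
    using assms(3,4) unfolding Bset_eq_image by auto
  have idx: "a*n + c < n * Suc n" "a'*n + c' < n * Suc n"
    using pair_index_less[OF ac(1,2)] pair_index_less[OF ac'(1,2)] by (simp_all add: mult.commute)
  have "(\<Sum>y\<in>Wset n. Kast n x y * WB_of_mat n B y z)
      = (\<Sum>j<n. \<Sum>k<Suc n. kast_mat n $$ (a*n + c, j * Suc n + k) * B $$ (j * Suc n + k, a'*n + c'))"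
    unfolding sum_Wset ac(3) ac'(3)
  proof (intro sum.cong refl)
    fix j k assume "j \<in> {..<n}" "k \<in> {..<Suc n}"
    then have jk: "j < n" "k < Suc n"
      by simp_all
    then show "Kast n (2*a, 2*c+1) (2*j+1, 2*k) * WB_of_mat n B (2*j+1, 2*k) (2*a', 2*c'+1)
        = kast_mat n $$ (a*n + c, j * Suc n + k) * B $$ (j * Suc n + k, a'*n + c')"
      using ac(1) by (simp only: Kast_eq_kast[OF _ ac(2) jk(1)] WB_of_mat_pair[OF jk ac'(1,2)]
          kast_mat_index[OF ac(1,2) jk] less_Suc_eq_le)
  qed
  also have "\<dots> = (kast_mat n * B) $$ (a*n + c, a'*n + c')"
    unfolding mult_mat_index_sum[OF kast_mat_carrier B idx] sum_lessThan_mult ..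
  also have "\<dots> = (if x = z then 1 else 0)"
    using idx ac ac' pair_index_eq_iff[OF ac(2) ac'(2), of a a'] by (simp add: KB)
  finally show ?thesis .
qed

lemma WB_of_mat_mult_Kast:
  assumes B: "B \<in> carrier_mat (n * Suc n) (n * Suc n)"
    and BK: "B * kast_mat n = 1\<^sub>m (n * Suc n)" and "y \<in> Wset n" "y' \<in> Wset n"
  shows "(\<Sum>x\<in>Bset n. WB_of_mat n B y x * Kast n x y') = (if y = y' then 1 else 0)"
proof -
  obtain j k j' k' where jk: "j < n" "k < Suc n" "y = (2*j+1, 2*k)"
    and jk': "j' < n" "k' < Suc n" "y' = (2*j'+1, 2*k')"
    using assms(3,4) unfolding Wset_eq_image by auto
  have idx: "j * Suc n + k < n * Suc n" "j' * Suc n + k' < n * Suc n"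
    using pair_index_less[OF jk(1,2)] pair_index_less[OF jk'(1,2)] by simp_all
  have "(\<Sum>x\<in>Bset n. WB_of_mat n B y x * Kast n x y')
      = (\<Sum>a<Suc n. \<Sum>c<n. B $$ (j * Suc n + k, a*n + c) * kast_mat n $$ (a*n + c, j' * Suc n + k'))"
    unfolding sum_Bset jk(3) jk'(3)
  proof (intro sum.cong refl)
    fix a c assume "a \<in> {..<Suc n}" "c \<in> {..<n}"
    then have ac: "a < Suc n" "c < n"
      by simp_all
    then show "WB_of_mat n B (2*j+1, 2*k) (2*a, 2*c+1) * Kast n (2*a, 2*c+1) (2*j'+1, 2*k')
        = B $$ (j * Suc n + k, a*n + c) * kast_mat n $$ (a*n + c, j' * Suc n + k')"
      using jk'(2) by (simp only: Kast_eq_kast[OF _ ac(2) jk'(1)] WB_of_mat_pair[OF jk(1,2) ac]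
          kast_mat_index[OF ac jk'(1,2)] less_Suc_eq_le)
  qed
  also have "\<dots> = (B * kast_mat n) $$ (j * Suc n + k, j' * Suc n + k')"
    unfolding mult_mat_index_sum[OF B kast_mat_carrier idx] mult.commute[of n "Suc n"] sum_lessThan_mult ..
  also have "\<dots> = (if y = y' then 1 else 0)"
    using idx jk jk' pair_index_eq_iff[OF jk(2) jk'(2), of j j'] by (simp add: BK)
  finally show ?thesis .
qed

lemma is_Kinv_WB_of_mat:
  assumes "B \<in> carrier_mat (n * Suc n) (n * Suc n)"
    and "B * kast_mat n = 1\<^sub>m (n * Suc n)" "kast_mat n * B = 1\<^sub>m (n * Suc n)"
  shows "is_Kinv n (WB_of_mat n B)"
  using assms Kast_mult_WB_of_mat WB_of_mat_mult_Kast unfolding is_Kinv_def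
  by (auto simp: WB_of_mat_def)

lemma is_Kinv_unique:
  assumes G: "is_Kinv n G" and H: "is_Kinv n H"
  shows "G = H"
proof (intro ext)
  fix y x
  show "G y x = H y x"
  proof (cases "y \<in> Wset n \<and> x \<in> Bset n")
    case False
    then have "G y x = 0" "H y x = 0"
      using G H unfolding is_Kinv_def by blast+
    then show ?thesis
      by simp
  next
    case True
    have fin: "finite (Wset n)" "finite (Bset n)"
      by (simp_all add: Wset_eq_image Bset_eq_image)
    have "G y x = (\<Sum>x'\<in>Bset n. if x' = x then G y x' else 0)"
      using True fin(2) by simp
    also have "\<dots> = (\<Sum>x'\<in>Bset n. G y x' * (\<Sum>y'\<in>Wset n. Kast n x' y' * H y' x))"
      using H True unfolding is_Kinv_def by (intro sum.cong refl) auto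
    also have "\<dots> = (\<Sum>y'\<in>Wset n. (\<Sum>x'\<in>Bset n. G y x' * Kast n x' y') * H y' x)"
      by (simp add: sum_distrib_left sum_distrib_right mult.assoc sum.swap[where A = "Bset n"])
    also have "\<dots> = (\<Sum>y'\<in>Wset n. if y = y' then H y' x else 0)"
      using G True unfolding is_Kinv_def by (intro sum.cong refl) auto
    also have "\<dots> = H y x"
      using True fin(1) by simp
    finally show ?thesis .
  qed
qed

lemma is_Kinv_Kinv:
  assumes "0 < n"
  shows "is_Kinv n (Kinv n)"
proof -
  obtain B where "is_Kinv n (WB_of_mat n B)"
    using kast_mat_invertible[OF assms] is_Kinv_WB_of_mat by metis
  then show ?thesis
    unfolding Kinv_def using is_Kinv_unique by (metis theI)
qed

definition kinv :: "nat \<Rightarrow> nat \<Rightarrow> nat \<Rightarrow> nat \<Rightarrow> nat \<Rightarrow> complex" where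
  "kinv n j k a c = Kinv n (2*j+1, 2*k) (2*a, 2*c+1)"

lemma kast_kinv:
  assumes "0 < n" "a < Suc n" "c < n" "a' < Suc n" "c' < n"
  shows "(\<Sum>j<n. \<Sum>k<Suc n. kast a c j k * kinv n j k a' c') = (if a = a' \<and> c = c' then 1 else 0)"
proof -
  have "(2*a, 2*c+1) \<in> Bset n" "(2*a', 2*c'+1) \<in> Bset n"
    using assms unfolding Bset_eq_image by auto
  then have "(\<Sum>y\<in>Wset n. Kast n (2*a, 2*c+1) y * Kinv n y (2*a', 2*c'+1)) = (if a = a' \<and> c = c' then 1 else 0)"
    using is_Kinv_Kinv[OF assms(1)] unfolding is_Kinv_def by auto
  moreover have "Kast n (2*a, 2*c+1) (2*j+1, 2*k) = kast a c j k" if "j < n" "k < Suc n" for j k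
    using assms(2,3) that by (intro Kast_eq_kast) simp_all
  ultimately show ?thesis
    by (simp add: sum_Wset kinv_def)
qed

lemma kinv_kast:
  assumes "0 < n" "j < n" "k < Suc n" "j' < n" "k' < Suc n"
  shows "(\<Sum>a<Suc n. \<Sum>c<n. kinv n j k a c * kast a c j' k') = (if j = j' \<and> k = k' then 1 else 0)"
proof -
  have "(2*j+1, 2*k) \<in> Wset n" "(2*j'+1, 2*k') \<in> Wset n"
    using assms unfolding Wset_eq_image by auto
  then have "(\<Sum>x\<in>Bset n. Kinv n (2*j+1, 2*k) x * Kast n x (2*j'+1, 2*k')) = (if j = j' \<and> k = k' then 1 else 0)"
    using is_Kinv_Kinv[OF assms(1)] unfolding is_Kinv_def by auto
  moreover have "Kast n (2*a, 2*c+1) (2*j'+1, 2*k') = kast a c j' k'" if "a < Suc n" "c < n" for a c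
    using assms(4,5) that by (intro Kast_eq_kast) simp_all
  ultimately show ?thesis
    by (simp add: sum_Bset kinv_def del: sum.lessThan_Suc)
qed

section \<open>The generating function of the inverse\<close>

(* kinv_row n k \<alpha> p q is the generating function of the white row x\<^sub>2 = 2k of K\<^sup>-\<^sup>1, with \<alpha> marking j and
   p, q the black vertex; kinv_corner n k a fixes moreover the black column y\<^sub>1 = 2a. *)
definition kinv_row :: "nat \<Rightarrow> nat \<Rightarrow> complex \<Rightarrow> complex \<Rightarrow> complex \<Rightarrow> complex" where
  "kinv_row n k \<alpha> p q = (\<Sum>a<Suc n. \<Sum>c<n. (\<Sum>j<n. kinv n j k a c * \<alpha>^j) * p^a * q^c)"

definition kinv_corner :: "nat \<Rightarrow> nat \<Rightarrow> nat \<Rightarrow> complex \<Rightarrow> complex \<Rightarrow> complex" where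
  "kinv_corner n k a \<alpha> q = (\<Sum>c<n. (\<Sum>j<n. kinv n j k a c * \<alpha>^j) * q^c)"

definition kinv_genfun :: "nat \<Rightarrow> complex \<Rightarrow> complex \<Rightarrow> complex \<Rightarrow> complex \<Rightarrow> complex" where
  "kinv_genfun n \<alpha> \<gamma> p q = (\<Sum>k<Suc n. kinv_row n k \<alpha> p q * \<gamma>^k)"

lemma sum_swap3: "(\<Sum>a\<in>A. \<Sum>c\<in>C. \<Sum>j\<in>J. f a c j) = (\<Sum>j\<in>J. \<Sum>a\<in>A. \<Sum>c\<in>C. f a c j)"
proof -
  have "(\<Sum>a\<in>A. \<Sum>c\<in>C. \<Sum>j\<in>J. f a c j) = (\<Sum>a\<in>A. \<Sum>j\<in>J. \<Sum>c\<in>C. f a c j)"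
    by (intro sum.cong refl sum.swap)
  also have "\<dots> = (\<Sum>j\<in>J. \<Sum>a\<in>A. \<Sum>c\<in>C. f a c j)"
    by (rule sum.swap)
  finally show ?thesis .
qed

lemma kinv_row_eq: "kinv_row n k \<alpha> p q = (\<Sum>j<n. (\<Sum>a<Suc n. \<Sum>c<n. kinv n j k a c * p^a * q^c) * \<alpha>^j)"
proof -
  have "kinv_row n k \<alpha> p q = (\<Sum>a<Suc n. \<Sum>c<n. \<Sum>j<n. kinv n j k a c * p^a * q^c * \<alpha>^j)"
    unfolding kinv_row_def by (simp add: sum_distrib_left sum_distrib_right mult_ac del: sum.lessThan_Suc)
  also have "\<dots> = (\<Sum>j<n. \<Sum>a<Suc n. \<Sum>c<n. kinv n j k a c * p^a * q^c * \<alpha>^j)"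
    by (rule sum_swap3)
  finally show ?thesis
    by (simp add: sum_distrib_right del: sum.lessThan_Suc)
qed

lemma kinv_row_relation:
  assumes "0 < n" "k < Suc n"
  shows "p * (q^k * fpoly n (\<alpha>*p)) = kinv_row n k \<alpha> p q * Csq p q
    - (1 + \<i>*q) * kinv_corner n k 0 \<alpha> q - p^Suc n * (q + \<i>) * kinv_corner n k n \<alpha> q"
proof -
  define v where "v a c = (\<Sum>j<n. kinv n j k a c * \<alpha>^j)" for a c
  have v_kast: "(\<Sum>a<Suc n. \<Sum>c<n. v a c * kast a c j' k') = (if k = k' then \<alpha>^j' else 0)"
    if "j' < n" "k' < Suc n" for j' k'
  proof -
    have "(\<Sum>a<Suc n. \<Sum>c<n. v a c * kast a c j' k')
        = (\<Sum>a<Suc n. \<Sum>c<n. \<Sum>j<n. \<alpha>^j * (kinv n j k a c * kast a c j' k'))"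
      unfolding v_def by (simp add: sum_distrib_left sum_distrib_right mult_ac del: sum.lessThan_Suc)
    also have "\<dots> = (\<Sum>j<n. \<alpha>^j * (\<Sum>a<Suc n. \<Sum>c<n. kinv n j k a c * kast a c j' k'))"
      by (subst sum_swap3) (simp add: sum_distrib_left del: sum.lessThan_Suc)
    also have "\<dots> = (\<Sum>j<n. if j = j' then (if k = k' then \<alpha>^j else 0) else 0)"
      using that assms by (intro sum.cong refl) (simp add: kinv_kast del: sum.lessThan_Suc)
    also have "\<dots> = (if k = k' then \<alpha>^j' else 0)"
      using that by simp
    finally show ?thesis .
  qed
  have "(\<Sum>j<n. \<Sum>k'<Suc n. (\<Sum>a<Suc n. \<Sum>c<n. v a c * kast a c j k') * p^j * q^k')
      = (\<Sum>j<n. \<Sum>k'<Suc n. if k' = k then \<alpha>^j * p^j * q^k else 0)"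
    by (intro sum.cong refl) (simp add: v_kast del: sum.lessThan_Suc)
  also have "\<dots> = (\<Sum>j<n. (\<alpha>*p)^j) * q^k"
    using assms(2) by (simp add: sum_distrib_right power_mult_distrib del: sum.lessThan_Suc)
  finally have "p * (\<Sum>j<n. \<Sum>k'<Suc n. (\<Sum>a<Suc n. \<Sum>c<n. v a c * kast a c j k') * p^j * q^k')
      = p * (q^k * fpoly n (\<alpha>*p))"
    by (simp add: fpoly_def mult.commute)
  then show ?thesis
    unfolding vec_kast_genfun kinv_row_def kinv_corner_def v_def by (rule sym)
qed

lemma kinv_genfun_relation:
  assumes "0 < n"
  shows "\<gamma> * (fpoly (Suc n) (\<alpha>*p) * fpoly n (\<gamma>*q)) = kinv_genfun n \<alpha> \<gamma> p q * Csq \<alpha> \<gamma>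
    - (1 + \<i>*\<alpha>) * kinv_row n 0 \<alpha> p q - \<gamma>^Suc n * (\<alpha> + \<i>) * kinv_row n n \<alpha> p q"
proof -
  define u where "u j k = (\<Sum>a<Suc n. \<Sum>c<n. kinv n j k a c * p^a * q^c)" for j k
  have kast_u: "(\<Sum>j<n. \<Sum>k<Suc n. kast a c j k * u j k) = p^a * q^c" if "a < Suc n" "c < n" for a c
  proof -
    have "(\<Sum>j<n. \<Sum>k<Suc n. kast a c j k * u j k)
        = (\<Sum>j<n. \<Sum>k<Suc n. \<Sum>a'<Suc n. \<Sum>c'<n. p^a' * q^c' * (kast a c j k * kinv n j k a' c'))"
      unfolding u_def by (simp add: sum_distrib_left mult_ac del: sum.lessThan_Suc)
    also have "\<dots> = (\<Sum>a'<Suc n. \<Sum>c'<n. \<Sum>j<n. \<Sum>k<Suc n. p^a' * q^c' * (kast a c j k * kinv n j k a' c'))"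
      by (rule sum_swap_pairs)
    also have "\<dots> = (\<Sum>a'<Suc n. \<Sum>c'<n. p^a' * q^c' * (\<Sum>j<n. \<Sum>k<Suc n. kast a c j k * kinv n j k a' c'))"
      by (simp add: sum_distrib_left del: sum.lessThan_Suc)
    also have "\<dots> = (\<Sum>a'<Suc n. \<Sum>c'<n. (if a' = a \<and> c' = c then 1 else 0) * (p^a' * q^c'))"
      using assms that by (intro sum.cong refl) (simp add: kast_kinv del: sum.lessThan_Suc)
    also have "\<dots> = p^a * q^c"
      using that by (simp only: sum_sum_delta) simp
    finally show ?thesis .
  qed
  have "(\<Sum>a<Suc n. \<Sum>c<n. (\<Sum>j<n. \<Sum>k<Suc n. kast a c j k * u j k) * \<alpha>^a * \<gamma>^c)
      = (\<Sum>a<Suc n. \<Sum>c<n. (\<alpha>*p)^a * (\<gamma>*q)^c)"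
    by (intro sum.cong refl) (simp only: lessThan_iff kast_u, simp add: power_mult_distrib mult_ac)
  also have "\<dots> = fpoly (Suc n) (\<alpha>*p) * fpoly n (\<gamma>*q)"
    by (simp only: fpoly_def sum_product)
  finally have "(\<Sum>a<Suc n. \<Sum>c<n. (\<Sum>j<n. \<Sum>k<Suc n. kast a c j k * u j k) * \<alpha>^a * \<gamma>^c)
      = fpoly (Suc n) (\<alpha>*p) * fpoly n (\<gamma>*q)" .
  moreover have "(\<Sum>j<n. \<Sum>k<Suc n. u j k * \<alpha>^j * \<gamma>^k) = kinv_genfun n \<alpha> \<gamma> p q"
    unfolding kinv_genfun_def kinv_row_eq u_def
    by (simp add: sum_distrib_left sum_distrib_right mult_ac sum.swap[where A = "{..<n}" and B = "{..<Suc n}"]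
        del: sum.lessThan_Suc)
  moreover have "(\<Sum>j<n. u j k * \<alpha>^j) = kinv_row n k \<alpha> p q" for k
    unfolding kinv_row_eq u_def ..
  ultimately show ?thesis
    using kast_vec_genfun[where x = \<gamma> and n = n and u = u and y = \<alpha>] by simp
qed

lemma Gen_eq_kinv_genfun:
  "Gen n w1 w2 b1 b2 = w1 * b2 * kinv_genfun n (w1^2) (w2^2) (b1^2) (b2^2)"
proof -
  have "Gen n w1 w2 b1 b2 = (\<Sum>j<n. \<Sum>k<Suc n. \<Sum>a<Suc n. \<Sum>c<n.
      w1 * b2 * (kinv n j k a c * (w1^2)^j * (w2^2)^k * (b1^2)^a * (b2^2)^c))"
    unfolding Gen_def sum_Wset sum_Bset kinv_def fst_conv snd_conv power_add power_mult
    by (simp only: power_one_right mult_ac)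
  also have "\<dots> = w1 * b2 * kinv_genfun n (w1^2) (w2^2) (b1^2) (b2^2)"
    unfolding kinv_genfun_def kinv_row_eq
    by (subst sum.swap) (simp add: sum_distrib_left sum_distrib_right mult_ac del: sum.lessThan_Suc)
  finally show ?thesis .
qed

lemma kinv_genfun_closed_form:
  assumes "0 < n" "Csq \<alpha> \<gamma> \<noteq> 0" "Csq p q \<noteq> 0"
  shows "kinv_genfun n \<alpha> \<gamma> p q = \<gamma> * fpoly (Suc n) (\<alpha>*p) * fpoly n (\<gamma>*q) / Csq \<alpha> \<gamma>
    + (1 + \<i>*\<alpha>) * ((1 + \<i>*q) * kinv_corner n 0 0 \<alpha> q
        + p * (fpoly n (\<alpha>*p) + (\<i> + q) * p^n * kinv_corner n 0 n \<alpha> q)) / (Csq \<alpha> \<gamma> * Csq p q)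
    + (\<i> + \<alpha>) * \<gamma> * (p * q^n * \<gamma>^n * fpoly n (\<alpha>*p) + (1 + \<i>*q) * \<gamma>^n * kinv_corner n n 0 \<alpha> q
        + p * (\<i> + q) * \<gamma>^n * p^n * kinv_corner n n n \<alpha> q) / (Csq \<alpha> \<gamma> * Csq p q)" (is "_ = ?rhs")
proof -
  have row0: "kinv_row n 0 \<alpha> p q
      = (p * fpoly n (\<alpha>*p) + (1 + \<i>*q) * kinv_corner n 0 0 \<alpha> q
         + p^Suc n * (q + \<i>) * kinv_corner n 0 n \<alpha> q) / Csq p q"
    using kinv_row_relation[OF assms(1), of 0 p q \<alpha>] assms(3) by (simp add: field_simps)
  have rown: "kinv_row n n \<alpha> p q
      = (p * (q^n * fpoly n (\<alpha>*p)) + (1 + \<i>*q) * kinv_corner n n 0 \<alpha> q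
         + p^Suc n * (q + \<i>) * kinv_corner n n n \<alpha> q) / Csq p q"
    using kinv_row_relation[OF assms(1), of n p q \<alpha>] assms(3) by (simp add: field_simps)
  have "kinv_genfun n \<alpha> \<gamma> p q
      = (\<gamma> * (fpoly (Suc n) (\<alpha>*p) * fpoly n (\<gamma>*q)) + (1 + \<i>*\<alpha>) * kinv_row n 0 \<alpha> p q
         + \<gamma>^Suc n * (\<alpha> + \<i>) * kinv_row n n \<alpha> p q) / Csq \<alpha> \<gamma>"
    using kinv_genfun_relation[OF assms(1), of \<gamma> \<alpha> p q] assms(2) by (simp add: field_simps)
  also have "\<dots> = ?rhs"
    unfolding row0 rown using assms(2,3) by (simp add: field_simps)
  finally show ?thesis .
qed

section \<open>The corners\<close>

lemma fpoly_closed: "t \<noteq> 1 \<Longrightarrow> fpoly n t = (1 - t^n) / (1 - t)"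
  unfolding fpoly_def using sum_gp_strict[of t n] by simp

lemma fpoly_product_identity:
  assumes "t = u * t'" "t \<noteq> 1" "t' \<noteq> 1" "u \<noteq> 1"
    and "A * (1 - u) = 1 - t" "B * (1 - u) = 1 - t'"
  shows "A * fpoly n t - B * u^n * fpoly n t' = fpoly n u"
proof -
  have "A = (1 - t) / (1 - u)" "B = (1 - t') / (1 - u)"
    using assms(4-6) by (simp_all add: field_simps)
  then have eqs: "A * fpoly n t = (1 - t^n) / (1 - u)" "B * fpoly n t' = (1 - t'^n) / (1 - u)"
    using assms(2,3) by (simp_all add: fpoly_closed)
  have "A * fpoly n t - B * u^n * fpoly n t' = A * fpoly n t - u^n * (B * fpoly n t')"
    by (simp add: mult_ac)
  also have "\<dots> = (1 - t^n) / (1 - u) - u^n * ((1 - t'^n) / (1 - u))"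
    unfolding eqs ..
  also have "\<dots> = (1 - u^n) / (1 - u)"
    using assms(1,4) by (simp add: power_mult_distrib field_simps)
  finally show ?thesis
    using assms(4) by (simp add: fpoly_closed)
qed

lemma Fn_first_row_identity:
  assumes "0 < n" "\<alpha> \<noteq> 0" "q + \<i> \<noteq> 0" "q + \<i> + \<alpha> + \<i>*\<alpha>*q \<noteq> 0"
  shows "Fn n \<alpha> q - Csq_root q ^ n * (\<i> * \<alpha>^(n-1) * Fn n (-1/\<alpha>) (-q))
    = fpoly n (\<alpha> * Csq_root q) / (q + \<i>)"
proof -
  define N where "N = q + \<i> + \<alpha> + \<i>*\<alpha>*q"
  define s where "s = Csq_root q"
  define t0 where "t0 = (1 + q*\<i>) * (1 + \<alpha>*\<i>) / 2"
  define t1 where "t1 = (1 + (-q)*\<i>) * (1 + (-1/\<alpha>)*\<i>) / 2"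
  have qs: "(q + \<i>) * s = - (1 + \<i>*q)"
    unfolding s_def using assms(3) by (rule Csq_root_mult)
  have "(q + \<i>) * (1 - \<alpha>*s) = (q + \<i>) - \<alpha> * ((q + \<i>) * s)"
    by (simp add: algebra_simps)
  also have "\<dots> = N"
    unfolding qs N_def by (simp add: algebra_simps)
  finally have u: "(q + \<i>) * (1 - \<alpha>*s) = N" .
  have "\<alpha>*s*t1 = ((q + \<i>) * s) * (- \<i>) * (\<alpha> * (1 + (-1/\<alpha>)*\<i>)) / 2"
    unfolding t1_def using assms(2) by (simp add: field_simps)
  also have "\<dots> = t0"
    unfolding qs t0_def using assms(2) by (simp add: field_simps)
  finally have t: "t0 = \<alpha>*s*t1" ..
  have t0: "1 - t0 = - \<i> * N / 2" and t1: "1 - t1 = N / (2*\<alpha>)"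
    using assms(2) by (simp_all add: N_def t0_def t1_def field_simps)
  have I: "(- \<i> * (q + \<i>) / 2) * fpoly n t0 - ((q + \<i>) / (2*\<alpha>)) * (\<alpha>*s)^n * fpoly n t1 = fpoly n (\<alpha>*s)"
  proof (rule fpoly_product_identity)
    show "t0 \<noteq> 1" "t1 \<noteq> 1"
      using assms(2,4) t0 t1 by (auto simp: N_def)
    show "\<alpha>*s \<noteq> 1"
      using u assms(4) by (auto simp: N_def)
    show "- \<i> * (q + \<i>) / 2 * (1 - \<alpha>*s) = 1 - t0" "(q + \<i>) / (2*\<alpha>) * (1 - \<alpha>*s) = 1 - t1"
      unfolding t0 t1 u[symmetric] by (simp_all add: field_simps)
  qed (rule t)
  have H1: "s^n * (\<i> * \<alpha>^(n-1) * Fn n (-1/\<alpha>) (-q)) = (1 / (2*\<alpha>)) * (\<alpha>*s)^n * fpoly n t1"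
  proof -
    have "\<alpha>^(n-1) = \<alpha>^n / \<alpha>"
      using assms(1,2) by (simp add: power_eq_if)
    then show ?thesis
      unfolding Fn_def t1_def using assms(2) by (simp add: power_mult_distrib field_simps)
  qed
  have H0: "Fn n \<alpha> q = - (\<i>/2) * fpoly n t0"
    unfolding Fn_def t0_def ..
  have "(- (\<i>/2) * fpoly n t0 - (1 / (2*\<alpha>)) * (\<alpha>*s)^n * fpoly n t1) * (q + \<i>) = fpoly n (\<alpha>*s)"
    unfolding I[symmetric] using assms(2) by (simp add: field_simps)
  then show ?thesis
    unfolding s_def[symmetric] H0 H1 by (rule eq_divide_imp[OF assms(3)])
qed

lemma Fn_last_row_identity:
  assumes "0 < n" "\<alpha> \<noteq> 0" "q \<noteq> 0" "q + \<i> \<noteq> 0" "q + \<i> + \<alpha> + \<i>*\<alpha>*q \<noteq> 0"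
  shows "\<i> * q^(n-1) * Fn n (-\<alpha>) (-1/q) - Csq_root q ^ n * (\<alpha>^(n-1) * q^(n-1) * Fn n (1/\<alpha>) (1/q))
    = q^n * fpoly n (\<alpha> * Csq_root q) / (q + \<i>)"
proof -
  define N where "N = q + \<i> + \<alpha> + \<i>*\<alpha>*q"
  define s where "s = Csq_root q"
  define t2 where "t2 = (1 + (-1/q)*\<i>) * (1 + (-\<alpha>)*\<i>) / 2"
  define t3 where "t3 = (1 + (1/q)*\<i>) * (1 + (1/\<alpha>)*\<i>) / 2"
  have qs: "(q + \<i>) * s = - (1 + \<i>*q)"
    unfolding s_def using assms(4) by (rule Csq_root_mult)
  have "(q + \<i>) * (1 - \<alpha>*s) = (q + \<i>) - \<alpha> * ((q + \<i>) * s)"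
    by (simp add: algebra_simps)
  also have "\<dots> = N"
    unfolding qs N_def by (simp add: algebra_simps)
  finally have u: "(q + \<i>) * (1 - \<alpha>*s) = N" .
  have "\<alpha>*s*t3 = ((q + \<i>) * s) * (\<alpha> * (1 + (1/\<alpha>)*\<i>)) / (2*q)"
    unfolding t3_def using assms(2,3) by (simp add: field_simps)
  also have "\<dots> = t2"
    unfolding qs t2_def using assms(2,3) by (simp add: field_simps)
  finally have t: "t2 = \<alpha>*s*t3" ..
  have t2: "1 - t2 = N / (2*q)" and t3: "1 - t3 = - \<i> * N / (2*\<alpha>*q)"
    using assms(2,3) by (simp_all add: N_def t2_def t3_def field_simps)
  have I: "((q + \<i>) / (2*q)) * fpoly n t2 - (- \<i> * (q + \<i>) / (2*\<alpha>*q)) * (\<alpha>*s)^n * fpoly n t3 = fpoly n (\<alpha>*s)"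
  proof (rule fpoly_product_identity)
    show "t2 \<noteq> 1" "t3 \<noteq> 1"
      using assms(2,3,5) t2 t3 by (auto simp: N_def)
    show "\<alpha>*s \<noteq> 1"
      using u assms(5) by (auto simp: N_def)
    show "(q + \<i>) / (2*q) * (1 - \<alpha>*s) = 1 - t2" "- \<i> * (q + \<i>) / (2*\<alpha>*q) * (1 - \<alpha>*s) = 1 - t3"
      unfolding t2 t3 u[symmetric] by (simp_all add: field_simps)
  qed (rule t)
  have H3: "s^n * (\<alpha>^(n-1) * q^(n-1) * Fn n (1/\<alpha>) (1/q)) = q^(n-1) * (- \<i> / (2*\<alpha>)) * (\<alpha>*s)^n * fpoly n t3"
  proof -
    have "\<alpha>^(n-1) = \<alpha>^n / \<alpha>"
      using assms(1,2) by (simp add: power_eq_if)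
    then show ?thesis
      unfolding Fn_def t3_def using assms(2) by (simp add: power_mult_distrib field_simps)
  qed
  have H2: "\<i> * q^(n-1) * Fn n (-\<alpha>) (-1/q) = q^(n-1) * (1/2) * fpoly n t2"
    unfolding Fn_def t2_def by (simp add: field_simps)
  have qn: "q^(n-1) = q^n / q"
    using assms(1,3) by (simp add: power_eq_if)
  have "(q^(n-1) * (1/2) * fpoly n t2 - q^(n-1) * (- \<i> / (2*\<alpha>)) * (\<alpha>*s)^n * fpoly n t3) * (q + \<i>)
      = q^n * fpoly n (\<alpha>*s)"
    unfolding I[symmetric] qn using assms(2,3) by (simp add: field_simps)
  then show ?thesis
    unfolding s_def[symmetric] H2 H3 by (rule eq_divide_imp[OF assms(4)])
qed

lemma degree_linear_power_le: "degree ([:a, b:] ^ k) \<le> k"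
  using degree_power_le[of "[:a, b:]" k] by (cases "b = 0") auto

lemma fpoly_linear_poly:
  assumes "0 < n"
  obtains P where "degree P < n" "\<And>q. poly P q = fpoly n (a + b*q)"
proof
  show "degree (\<Sum>k<n. [:a, b:] ^ k) < n"
    using assms by (intro degree_sum_less) (auto intro: le_less_trans[OF degree_linear_power_le])
  show "poly (\<Sum>k<n. [:a, b:] ^ k) q = fpoly n (a + b*q)" for q
    by (simp add: fpoly_def poly_sum mult.commute)
qed

lemma fpoly_reciprocal_poly:
  assumes "0 < n"
  obtains P where "degree P < n" "\<And>q. q \<noteq> 0 \<Longrightarrow> poly P q = q^(n-1) * fpoly n (a + b/q)"
proof
  show "degree (\<Sum>k<n. monom 1 (n-1-k) * [:b, a:] ^ k) < n"
  proof (intro degree_sum_less assms)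
    fix k assume "k \<in> {..<n}"
    then have "degree (monom (1::complex) (n-1-k)) + degree ([:b, a:] ^ k) < n"
      using degree_monom_le[of "1::complex" "n-1-k"] degree_linear_power_le[of b a k] by auto
    then show "degree (monom 1 (n-1-k) * [:b, a:] ^ k) < n"
      using degree_mult_le le_less_trans by blast
  qed
  show "poly (\<Sum>k<n. monom 1 (n-1-k) * [:b, a:] ^ k) q = q^(n-1) * fpoly n (a + b/q)" if "q \<noteq> 0" for q
  proof -
    have "q^(n-1-k) * (b + q*a)^k = q^(n-1) * (a + b/q)^k" if "k < n" for k
    proof -
      have "q^(n-1) = q^(n-1-k) * q^k"
        using that by (simp flip: power_add)
      then show ?thesis
        using \<open>q \<noteq> 0\<close> by (simp add: power_divide field_simps flip: power_mult_distrib)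
    qed
    then show ?thesis
      by (simp add: fpoly_def poly_sum poly_monom sum_distrib_left)
  qed
qed

lemma Fn_linear_poly:
  assumes "0 < n"
  obtains P where "degree P < n" "\<And>q. poly P q = c * Fn n w (d*q)"
proof -
  obtain P where P: "degree P < n" "\<And>q. poly P q = fpoly n ((1 + w*\<i>)/2 + (d*\<i>*(1 + w*\<i>)/2)*q)"
    using fpoly_linear_poly[OF assms, where a = "(1 + w*\<i>)/2" and b = "d*\<i>*(1 + w*\<i>)/2"] by blast
  have arg: "(1 + d*q*\<i>) * (1 + w*\<i>) / 2 = (1 + w*\<i>)/2 + (d*\<i>*(1 + w*\<i>)/2)*q" for q
    by (simp add: field_simps)
  show ?thesis
  proof (rule that)
    show "degree (smult (- c * \<i>/2) P) < n"
      using P(1) le_less_trans[OF degree_smult_le] by blast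
    show "poly (smult (- c * \<i>/2) P) q = c * Fn n w (d*q)" for q
      unfolding poly_smult P(2) Fn_def arg by simp
  qed
qed

lemma Fn_reciprocal_poly:
  assumes "0 < n"
  obtains P where "degree P < n" "\<And>q. q \<noteq> 0 \<Longrightarrow> poly P q = c * q^(n-1) * Fn n w (d/q)"
proof -
  obtain P where P: "degree P < n"
      "\<And>q. q \<noteq> 0 \<Longrightarrow> poly P q = q^(n-1) * fpoly n ((1 + w*\<i>)/2 + (d*\<i>*(1 + w*\<i>)/2)/q)"
    using fpoly_reciprocal_poly[OF assms, where a = "(1 + w*\<i>)/2" and b = "d*\<i>*(1 + w*\<i>)/2"] by blast
  have arg: "(1 + d/q*\<i>) * (1 + w*\<i>) / 2 = (1 + w*\<i>)/2 + (d*\<i>*(1 + w*\<i>)/2)/q" if "q \<noteq> 0" for q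
    using that by (simp add: field_simps)
  show ?thesis
  proof (rule that)
    show "degree (smult (- c * \<i>/2) P) < n"
      using P(1) le_less_trans[OF degree_smult_le] by blast
    show "poly (smult (- c * \<i>/2) P) q = c * q^(n-1) * Fn n w (d/q)" if "q \<noteq> 0" for q
      unfolding poly_smult P(2)[OF that] Fn_def arg[OF that] by simp
  qed
qed

lemma kinv_corners_eq_candidates:
  assumes "0 < n" "k < Suc n" "finite E" "degree L < n" "degree R < n"
    and cand: "\<And>q. q \<notin> E \<Longrightarrow> q + \<i> \<noteq> 0 \<and> 1 + \<i>*q \<noteq> 0 \<and>
      poly L q - Csq_root q ^ n * poly R q = q^k * fpoly n (\<alpha> * Csq_root q) / (q + \<i>)"
  shows "kinv_corner n k 0 \<alpha> q = poly L q \<and> kinv_corner n k n \<alpha> q = poly R q"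
proof -
  define KL where "KL = (\<Sum>c<n. monom (\<Sum>j<n. kinv n j k 0 c * \<alpha>^j) c)"
  define KR where "KR = (\<Sum>c<n. monom (\<Sum>j<n. kinv n j k n c * \<alpha>^j) c)"
  have KL: "poly KL q = kinv_corner n k 0 \<alpha> q" and KR: "poly KR q = kinv_corner n k n \<alpha> q" for q
    by (simp_all add: KL_def KR_def kinv_corner_def poly_sum_monom)
  have "KL - L = 0 \<and> KR - R = 0"
  proof (rule poly_eq_Csq_root_power_imp_zero[OF _ _ assms(3)])
    show "degree (KL - L) < n" "degree (KR - R) < n"
      using assms(1,4,5) by (simp_all add: KL_def KR_def degree_sum_monom_less degree_diff_less)
    show "\<forall>q. q \<notin> E \<longrightarrow> q + \<i> \<noteq> 0 \<and> poly (KL - L) q = Csq_root q ^ n * poly (KR - R) q"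
    proof (intro allI impI conjI)
      fix q assume "q \<notin> E"
      then have q: "q + \<i> \<noteq> 0" "1 + \<i>*q \<noteq> 0"
        and LR: "poly L q - Csq_root q ^ n * poly R q = q^k * fpoly n (\<alpha> * Csq_root q) / (q + \<i>)"
        using cand by blast+
      have "kinv_corner n k 0 \<alpha> q - Csq_root q ^ n * kinv_corner n k n \<alpha> q
          = q^k * fpoly n (\<alpha> * Csq_root q) / (q + \<i>)"
        using q kinv_row_relation[OF assms(1,2), of "Csq_root q" q \<alpha>]
        by (intro boundary_relation_at_Csq_root[where V = "kinv_row n k \<alpha> (Csq_root q) q"]) simp_all
      with LR show "poly (KL - L) q = Csq_root q ^ n * poly (KR - R) q"
        by (simp add: KL KR algebra_simps)
      show "q + \<i> \<noteq> 0"
        by (fact q(1))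
    qed
  qed
  then show ?thesis
    using KL KR by simp
qed

lemma nondegenerate_cofinite:
  obtains E where "finite E"
    "\<And>q. q \<notin> E \<Longrightarrow> q + \<i> \<noteq> 0 \<and> 1 + \<i>*q \<noteq> 0 \<and> q \<noteq> 0 \<and> q + \<i> + \<alpha> + \<i>*\<alpha>*q \<noteq> 0"
proof -
  define E where "E = {0, \<i>, -\<i>} \<union> {q. poly [:\<i> + \<alpha>, 1 + \<i>*\<alpha>:] q = 0}"
  have "[:\<i> + \<alpha>, 1 + \<i>*\<alpha>:] \<noteq> 0"
  proof (cases "\<i> + \<alpha> = 0")
    case True
    then have "\<alpha> = - \<i>"
      by (simp add: add_eq_0_iff)
    then show ?thesis
      by simp
  qed simp
  then have fin: "finite E"
    unfolding E_def by (intro finite_UnI finite.intros poly_roots_finite)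
  have "q + \<i> \<noteq> 0 \<and> 1 + \<i>*q \<noteq> 0 \<and> q \<noteq> 0 \<and> q + \<i> + \<alpha> + \<i>*\<alpha>*q \<noteq> 0" if "q \<notin> E" for q
  proof -
    have q: "q \<noteq> 0" "q \<noteq> \<i>" "q \<noteq> -\<i>" "poly [:\<i> + \<alpha>, 1 + \<i>*\<alpha>:] q \<noteq> 0"
      using that unfolding E_def by auto
    then have "q + \<i> + \<alpha> + \<i>*\<alpha>*q \<noteq> 0"
      by (simp add: algebra_simps)
    moreover have "1 + \<i>*q = \<i> * (q - \<i>)"
      by (simp add: algebra_simps)
    ultimately show ?thesis
      using q by (auto simp: add_eq_0_iff2)
  qed
  with fin show thesis
    by (rule that)
qed

lemma kinv_corners:
  assumes "0 < n" "\<alpha> \<noteq> 0"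
  shows "kinv_corner n 0 0 \<alpha> q = Fn n \<alpha> q"
    and "kinv_corner n 0 n \<alpha> q = \<i> * \<alpha>^(n-1) * Fn n (-1/\<alpha>) (-q)"
    and "q \<noteq> 0 \<Longrightarrow> kinv_corner n n 0 \<alpha> q = \<i> * q^(n-1) * Fn n (-\<alpha>) (-1/q)"
    and "q \<noteq> 0 \<Longrightarrow> kinv_corner n n n \<alpha> q = \<alpha>^(n-1) * q^(n-1) * Fn n (1/\<alpha>) (1/q)"
proof -
  obtain E where fin: "finite E"
    and good: "\<And>q. q \<notin> E \<Longrightarrow> q + \<i> \<noteq> 0 \<and> 1 + \<i>*q \<noteq> 0 \<and> q \<noteq> 0 \<and> q + \<i> + \<alpha> + \<i>*\<alpha>*q \<noteq> 0"
    using nondegenerate_cofinite[where \<alpha> = \<alpha>] by blast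
  obtain L0 where L0: "degree L0 < n" "\<And>q. poly L0 q = Fn n \<alpha> q"
    using Fn_linear_poly[OF assms(1), where c = 1 and w = \<alpha> and d = 1] by auto
  obtain R0 where R0: "degree R0 < n" "\<And>q. poly R0 q = \<i> * \<alpha>^(n-1) * Fn n (-1/\<alpha>) (-q)"
    using Fn_linear_poly[OF assms(1), where c = "\<i> * \<alpha>^(n-1)" and w = "-1/\<alpha>" and d = "-1"] by auto
  obtain L1 where L1: "degree L1 < n" "\<And>q. q \<noteq> 0 \<Longrightarrow> poly L1 q = \<i> * q^(n-1) * Fn n (-\<alpha>) (-1/q)"
    using Fn_reciprocal_poly[OF assms(1), where c = \<i> and w = "-\<alpha>" and d = "-1"] by blast
  obtain R1 where R1: "degree R1 < n" "\<And>q. q \<noteq> 0 \<Longrightarrow> poly R1 q = \<alpha>^(n-1) * q^(n-1) * Fn n (1/\<alpha>) (1/q)"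
    using Fn_reciprocal_poly[OF assms(1), where c = "\<alpha>^(n-1)" and w = "1/\<alpha>" and d = 1] by blast
  have bot: "kinv_corner n 0 0 \<alpha> q = poly L0 q \<and> kinv_corner n 0 n \<alpha> q = poly R0 q"
    using assms good Fn_first_row_identity
    by (intro kinv_corners_eq_candidates[OF assms(1) _ fin L0(1) R0(1)]) (simp_all add: L0(2) R0(2))
  have top: "kinv_corner n n 0 \<alpha> q = poly L1 q \<and> kinv_corner n n n \<alpha> q = poly R1 q"
    using assms good Fn_last_row_identity
    by (intro kinv_corners_eq_candidates[OF assms(1) _ fin L1(1) R1(1)]) (simp_all add: L1(2) R1(2))
  show "kinv_corner n 0 0 \<alpha> q = Fn n \<alpha> q" "kinv_corner n 0 n \<alpha> q = \<i> * \<alpha>^(n-1) * Fn n (-1/\<alpha>) (-q)"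
    using bot by (simp_all add: L0(2) R0(2))
  show "q \<noteq> 0 \<Longrightarrow> kinv_corner n n 0 \<alpha> q = \<i> * q^(n-1) * Fn n (-\<alpha>) (-1/q)"
    "q \<noteq> 0 \<Longrightarrow> kinv_corner n n n \<alpha> q = \<alpha>^(n-1) * q^(n-1) * Fn n (1/\<alpha>) (1/q)"
    using top by (simp_all add: L1(2) R1(2))
qed

lemma power_double_minus_one:
  fixes x :: "'a::monoid_mult"
  assumes "0 < n"
  shows "x^(2*n - 1) = x * (x^2)^(n-1)"
proof -
  have "2*n - 1 = Suc (2*(n-1))"
    using assms by simp
  then show ?thesis
    by (simp only: power_Suc power_mult)
qed

theorem theorem1:
  fixes n :: nat and w1 w2 b1 b2 :: complex
  assumes "n \<ge> 1"
    and "w1 \<noteq> 0" and "b2 \<noteq> 0"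
    and "Cpoly w1 w2 \<noteq> 0" and "Cpoly b1 b2 \<noteq> 0"
  shows "Gen n w1 w2 b1 b2 =
      w1 * w2^2 * b2 * fpoly (n+1) (w1^2 * b1^2) * fpoly n (w2^2 * b2^2) / Cpoly w1 w2
    + (1 + \<i> * w1^2) *
        ((1 + \<i> * b2^2) * F00 n w1 w2 b1 b2
         + b1^2 * (b2 * w1 * fpoly n (b1^2 * w1^2) + (\<i> + b2^2) * F01 n w1 w2 b1 b2))
        / (Cpoly w1 w2 * Cpoly b1 b2)
    + (\<i> + w1^2) * w2^2 *
        (b1^2 * b2^(2*n+1) * w1 * w2^(2*n) * fpoly n (b1^2 * w1^2)
         + (1 + \<i> * b2^2) * F10 n w1 w2 b1 b2
         + b1^2 * (\<i> + b2^2) * F11 n w1 w2 b1 b2)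
        / (Cpoly w1 w2 * Cpoly b1 b2)"
proof -
  have n: "0 < n"
    using assms(1) by simp
  have C: "Cpoly w1 w2 = Csq (w1^2) (w2^2)" "Cpoly b1 b2 = Csq (b1^2) (b2^2)"
    by (simp_all add: Cpoly_def Csq_def)
  have pw: "w1^(2*n-1) = w1 * (w1^2)^(n-1)" "b2^(2*n-1) = b2 * (b2^2)^(n-1)"
    "b1^(2*n) = (b1^2)^n" "w2^(2*n) = (w2^2)^n" "b2^(2*n+1) = b2 * (b2^2)^n"
    using power_double_minus_one[OF n] by (simp_all flip: power_mult)
  have F: "F00 n w1 w2 b1 b2 = w1 * b2 * kinv_corner n 0 0 (w1^2) (b2^2)"
    "F01 n w1 w2 b1 b2 = w1 * b2 * (b1^2)^n * kinv_corner n 0 n (w1^2) (b2^2)"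
    "F10 n w1 w2 b1 b2 = w1 * b2 * (w2^2)^n * kinv_corner n n 0 (w1^2) (b2^2)"
    "F11 n w1 w2 b1 b2 = w1 * b2 * (w2^2)^n * (b1^2)^n * kinv_corner n n n (w1^2) (b2^2)"
    using kinv_corners[OF n, of "w1^2" "b2^2"] assms(2,3)
    unfolding F00_def F01_def F10_def F11_def pw by (simp_all add: mult_ac)
  show ?thesis
    using assms(4,5)
    unfolding Gen_eq_kinv_genfun kinv_genfun_closed_form[OF n assms(4,5)[unfolded C]] F C pw(4,5)
    by (simp add: field_simps)
qed

end
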